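(* Let $A$ be an augmented dga, $\mathfrak a\lhd A$ an ideal and $C$ a cocomplete coaugmented dgc. Being related by an $\mathfrak a$-trivial homotopy is an equivalence relation on twisting cochains $C\to A$. More precisely: (i) if $h\colon t\simeq u$ and $k\colon u\simeq v$ are $\mathfrak a$-trivial twisting cochain homotopies, then $h\cup k$ is an $\mathfrak a$-trivial homotopy from $t$ to $v$; (ii) if $h\colon t\simeq u$ is an $\mathfrak a$-trivial twisting cochain homotopy, then $h$ is invertible in $\operatorname{Hom}_0(C,A)$ with inverse $h^{-1}=\sum_{n=0}^\infty(1-h)^{\cup n}$, and $h^{-1}$ is an $\mathfrak a$-trivial homotopy from $u$ to $t$.
   Context: An ideal means a two-sided differential ideal. $\operatorname{Hom}(C,A)$ is an augmented dga with cup product $f\cup g=\mu_A(f\otimes g)\Delta_C$, unit $1=\eta_A\epsilon_C$. $C$ is cocomplete if for each $c\in C$ some $n$ has $(1_C-\epsilon_C)^{\otimes n}\Delta^{(n)}(c)=0$ (iterated diagonal). A twisting cochain is $t\in\operatorname{Hom}^1(C,A)$ with $d(t)=t\cup t$, $\epsilon_At=0$, $t\eta_C=0$. A twisting cochain homotopy $h\colon t\simeq u$ is $h\in\operatorname{Hom}_0(C,A)$ with $d(h)=t\cup h-h\cup u$, $\epsilon_Ah=\epsilon_C$, $h\eta_C=\eta_A$; it is $\mathfrak a$-trivial if $h\equiv\eta_A\epsilon_C\pmod{\mathfrak a}$. *)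

theory Defs
  imports Main "HOL-Library.Poly_Mapping"
begin

text \<open>
Everything is homologically graded over the
integers, differentials have degree -1.  A graded k-module is an abelian group
type together with a scalar action and a family of projections onto the
homogeneous components (a direct sum decomposition).  Hom^n(C,A) (cohomological
degree n) consists of the k-linear maps of homological degree -n.
Tensor powers of C are represented by formal k-linear combinations of lists
(finitely supported functions on lists), taken modulo the k-submodule generated
by the multilinearity relations (tnull).
\<close>

definition signed :: "int \<Rightarrow> 'x::ab_group_add \<Rightarrow> 'x" where
  "signed p x = (if even p then x else - x)"

definition module_ax :: "('k::comm_ring_1 \<Rightarrow> 'm::ab_group_add \<Rightarrow> 'm) \<Rightarrow> bool" where
  "module_ax sm \<longleftrightarrow>
     (\<forall>r x y. sm r (x + y) = sm r x + sm r y) \<and>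
     (\<forall>r s x. sm (r + s) x = sm r x + sm s x) \<and>
     (\<forall>r s x. sm (r * s) x = sm r (sm s x)) \<and>
     (\<forall>x. sm 1 x = x)"

definition graded_ax :: "('k::comm_ring_1 \<Rightarrow> 'm::ab_group_add \<Rightarrow> 'm) \<Rightarrow> (int \<Rightarrow> 'm \<Rightarrow> 'm) \<Rightarrow> bool" where
  "graded_ax sm pr \<longleftrightarrow>
     (\<forall>p x y. pr p (x + y) = pr p x + pr p y) \<and>
     (\<forall>p r x. pr p (sm r x) = sm r (pr p x)) \<and>
     (\<forall>p q x. pr p (pr q x) = (if p = q then pr q x else 0)) \<and>
     (\<forall>x. finite {p. pr p x \<noteq> 0}) \<and>
     (\<forall>x. x = (\<Sum>p\<in>{p. pr p x \<noteq> 0}. pr p x))"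

definition homog :: "(int \<Rightarrow> 'm \<Rightarrow> 'm) \<Rightarrow> int \<Rightarrow> 'm \<Rightarrow> bool" where
  "homog pr n x \<longleftrightarrow> pr n x = x"

definition deg_map ::
  "('k::comm_ring_1 \<Rightarrow> 'm::ab_group_add \<Rightarrow> 'm) \<Rightarrow> (int \<Rightarrow> 'm \<Rightarrow> 'm) \<Rightarrow>
   ('k \<Rightarrow> 'n::ab_group_add \<Rightarrow> 'n) \<Rightarrow> (int \<Rightarrow> 'n \<Rightarrow> 'n) \<Rightarrow> int \<Rightarrow> ('m \<Rightarrow> 'n) \<Rightarrow> bool" where
  "deg_map smM prM smN prN n f \<longleftrightarrow>
     (\<forall>x y. f (x + y) = f x + f y) \<and>
     (\<forall>r x. f (smM r x) = smN r (f x)) \<and>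
     (\<forall>p x. homog prM p x \<longrightarrow> homog prN (p + n) (f x))"

type_synonym ('k, 'c) fsum = "'c list \<Rightarrow>\<^sub>0 'k"

definition fs_smul :: "'k::comm_ring_1 \<Rightarrow> ('k, 'c) fsum \<Rightarrow> ('k, 'c) fsum" where
  "fs_smul r p = Poly_Mapping.map (\<lambda>a. r * a) p"

definition gen :: "'c list \<Rightarrow> ('k::comm_ring_1, 'c) fsum" where
  "gen l = Poly_Mapping.single l 1"

definition fs_ext :: "('k::comm_ring_1 \<Rightarrow> 'v::ab_group_add \<Rightarrow> 'v) \<Rightarrow> ('c list \<Rightarrow> 'v) \<Rightarrow> ('k, 'c) fsum \<Rightarrow> 'v" where
  "fs_ext sm \<phi> p = (\<Sum>l\<in>Poly_Mapping.keys p. sm (Poly_Mapping.lookup p l) (\<phi> l))"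

text \<open>The k-submodule of multilinearity relations; the tensor algebra T(C) is the
  quotient of the free module on lists by it (lists of length n give C^{\<otimes>n}).\<close>
inductive_set tnull :: "('k::comm_ring_1 \<Rightarrow> 'c::ab_group_add \<Rightarrow> 'c) \<Rightarrow> ('k, 'c) fsum set"
  for sm where
  tn_zero: "0 \<in> tnull sm"
| tn_add: "a \<in> tnull sm \<Longrightarrow> b \<in> tnull sm \<Longrightarrow> a + b \<in> tnull sm"
| tn_smul: "a \<in> tnull sm \<Longrightarrow> fs_smul r a \<in> tnull sm"
| tn_additive: "gen (xs @ (x + y) # ys) - gen (xs @ x # ys) - gen (xs @ y # ys) \<in> tnull sm"
| tn_homog: "gen (xs @ sm r x # ys) - fs_smul r (gen (xs @ x # ys)) \<in> tnull sm"

definition teq :: "('k::comm_ring_1 \<Rightarrow> 'c::ab_group_add \<Rightarrow> 'c) \<Rightarrow> ('k, 'c) fsum \<Rightarrow> ('k, 'c) fsum \<Rightarrow> bool" where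
  "teq sm p q \<longleftrightarrow> p - q \<in> tnull sm"

definition graded_tensor :: "(int \<Rightarrow> 'c \<Rightarrow> 'c::ab_group_add) \<Rightarrow> int \<Rightarrow> ('k::comm_ring_1, 'c) fsum \<Rightarrow> bool" where
  "graded_tensor pr n p \<longleftrightarrow>
     (\<forall>l\<in>Poly_Mapping.keys p. \<exists>ds. length ds = length l \<and> (\<forall>i<length l. homog pr (ds ! i) (l ! i)) \<and> sum_list ds = n)"

record ('k, 'a) dga =
  a_smul :: "'k \<Rightarrow> 'a \<Rightarrow> 'a"
  a_proj :: "int \<Rightarrow> 'a \<Rightarrow> 'a"
  a_d :: "'a \<Rightarrow> 'a"
  a_eps :: "'a \<Rightarrow> 'k"

definition aug_dga :: "('k::comm_ring_1, 'a::ring_1) dga \<Rightarrow> bool" where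
  "aug_dga A \<longleftrightarrow>
     module_ax (a_smul A) \<and> graded_ax (a_smul A) (a_proj A) \<and>
     (\<forall>r a b. a_smul A r (a * b) = a_smul A r a * b) \<and>
     (\<forall>r a b. a_smul A r (a * b) = a * a_smul A r b) \<and>
     homog (a_proj A) 0 1 \<and>
     (\<forall>p q a b. homog (a_proj A) p a \<longrightarrow> homog (a_proj A) q b \<longrightarrow> homog (a_proj A) (p + q) (a * b)) \<and>
     deg_map (a_smul A) (a_proj A) (a_smul A) (a_proj A) (-1) (a_d A) \<and>
     (\<forall>a. a_d A (a_d A a) = 0) \<and>
     (\<forall>p a b. homog (a_proj A) p a \<longrightarrow> a_d A (a * b) = a_d A a * b + signed p (a * a_d A b)) \<and>
     (\<forall>a b. a_eps A (a + b) = a_eps A a + a_eps A b) \<and>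
     (\<forall>r a. a_eps A (a_smul A r a) = r * a_eps A a) \<and>
     (\<forall>a b. a_eps A (a * b) = a_eps A a * a_eps A b) \<and>
     a_eps A 1 = 1 \<and>
     (\<forall>p a. p \<noteq> 0 \<longrightarrow> a_eps A (a_proj A p a) = 0) \<and>
     (\<forall>a. a_eps A (a_d A a) = 0)"

definition dg_ideal :: "('k::comm_ring_1, 'a::ring_1) dga \<Rightarrow> 'a set \<Rightarrow> bool" where
  "dg_ideal A I \<longleftrightarrow>
     0 \<in> I \<and> (\<forall>x\<in>I. \<forall>y\<in>I. x + y \<in> I) \<and> (\<forall>x\<in>I. - x \<in> I) \<and>
     (\<forall>r. \<forall>x\<in>I. a_smul A r x \<in> I) \<and>
     (\<forall>a. \<forall>x\<in>I. a * x \<in> I \<and> x * a \<in> I) \<and>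
     (\<forall>x\<in>I. a_d A x \<in> I) \<and>
     (\<forall>p. \<forall>x\<in>I. a_proj A p x \<in> I)"

record (overloaded) ('k::zero, 'c) dgc =
  c_smul :: "'k \<Rightarrow> 'c \<Rightarrow> 'c"
  c_proj :: "int \<Rightarrow> 'c \<Rightarrow> 'c"
  c_d :: "'c \<Rightarrow> 'c"
  c_Delta :: "'c \<Rightarrow> ('k, 'c) fsum"
  c_eps :: "'c \<Rightarrow> 'k"
  c_unit :: "'c"  \<comment> \<open>the coaugmentation \<eta>_C is r \<mapsto> r \<cdot> c_unit\<close>

definition Delta_left :: "('k::comm_ring_1, 'c) dgc \<Rightarrow> 'c list \<Rightarrow> ('k, 'c) fsum" where
  "Delta_left C l = fs_ext fs_smul (\<lambda>m. gen (m @ tl l)) (c_Delta C (hd l))"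

definition Delta_right :: "('k::comm_ring_1, 'c) dgc \<Rightarrow> 'c list \<Rightarrow> ('k, 'c) fsum" where
  "Delta_right C l = fs_ext fs_smul (\<lambda>m. gen (hd l # m)) (c_Delta C (l ! 1))"

text \<open>d \<otimes> 1 + 1 \<otimes> d on a generator [x,y] (Koszul sign).\<close>
definition d_tensor2 :: "('k::comm_ring_1, 'c::ab_group_add) dgc \<Rightarrow> 'c list \<Rightarrow> ('k, 'c) fsum" where
  "d_tensor2 C l = gen [c_d C (l ! 0), l ! 1] +
     (\<Sum>p\<in>{p. c_proj C p (l ! 0) \<noteq> 0}. signed p (gen [c_proj C p (l ! 0), c_d C (l ! 1)]))"

definition coaug_dgc :: "('k::comm_ring_1, 'c::ab_group_add) dgc \<Rightarrow> bool" where
  "coaug_dgc C \<longleftrightarrow>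
     module_ax (c_smul C) \<and> graded_ax (c_smul C) (c_proj C) \<and>
     deg_map (c_smul C) (c_proj C) (c_smul C) (c_proj C) (-1) (c_d C) \<and>
     (\<forall>x. c_d C (c_d C x) = 0) \<and>
     (\<forall>x. \<forall>l\<in>Poly_Mapping.keys (c_Delta C x). length l = 2) \<and>
     (\<forall>x y. teq (c_smul C) (c_Delta C (x + y)) (c_Delta C x + c_Delta C y)) \<and>
     (\<forall>r x. teq (c_smul C) (c_Delta C (c_smul C r x)) (fs_smul r (c_Delta C x))) \<and>
     (\<forall>n x. homog (c_proj C) n x \<longrightarrow>
        (\<exists>q. teq (c_smul C) (c_Delta C x) q \<and> graded_tensor (c_proj C) n q)) \<and>
     (\<forall>x. teq (c_smul C) (fs_ext fs_smul (Delta_left C) (c_Delta C x))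
                         (fs_ext fs_smul (Delta_right C) (c_Delta C x))) \<and>
     (\<forall>x. teq (c_smul C) (c_Delta C (c_d C x)) (fs_ext fs_smul (d_tensor2 C) (c_Delta C x))) \<and>
     (\<forall>x y. c_eps C (x + y) = c_eps C x + c_eps C y) \<and>
     (\<forall>r x. c_eps C (c_smul C r x) = r * c_eps C x) \<and>
     (\<forall>p x. p \<noteq> 0 \<longrightarrow> c_eps C (c_proj C p x) = 0) \<and>
     (\<forall>x. c_eps C (c_d C x) = 0) \<and>
     (\<forall>x. fs_ext (c_smul C) (\<lambda>l. c_smul C (c_eps C (l ! 0)) (l ! 1)) (c_Delta C x) = x) \<and>
     (\<forall>x. fs_ext (c_smul C) (\<lambda>l. c_smul C (c_eps C (l ! 1)) (l ! 0)) (c_Delta C x) = x) \<and>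
     homog (c_proj C) 0 (c_unit C) \<and> c_d C (c_unit C) = 0 \<and> c_eps C (c_unit C) = 1 \<and>
     teq (c_smul C) (c_Delta C (c_unit C)) (gen [c_unit C, c_unit C])"

text \<open>Iterated diagonal: Delta_iter n c \<in> C^{\<otimes>(n+1)}.\<close>
primrec Delta_iter :: "('k::comm_ring_1, 'c) dgc \<Rightarrow> nat \<Rightarrow> 'c \<Rightarrow> ('k, 'c) fsum" where
  "Delta_iter C 0 c = gen [c]"
| "Delta_iter C (Suc n) c = fs_ext fs_smul (Delta_left C) (Delta_iter C n c)"

definition cocomplete :: "('k::comm_ring_1, 'c::ab_group_add) dgc \<Rightarrow> bool" where
  "cocomplete C \<longleftrightarrow>
     (\<forall>c. \<exists>n. fs_ext fs_smul (\<lambda>l. gen (map (\<lambda>x. x - c_smul C (c_eps C x) (c_unit C)) l))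
                 (Delta_iter C n c) \<in> tnull (c_smul C))"

definition hom_deg :: "('k::comm_ring_1, 'c::ab_group_add) dgc \<Rightarrow> ('k, 'a::ring_1) dga \<Rightarrow> int \<Rightarrow> ('c \<Rightarrow> 'a) \<Rightarrow> bool" where
  "hom_deg C A n f \<longleftrightarrow> deg_map (c_smul C) (c_proj C) (a_smul A) (a_proj A) n f"

text \<open>Cup product f \<union> g = \<mu>_A (f \<otimes> g) \<Delta>_C, where n is the degree of g
  (Koszul sign (f \<otimes> g)(x \<otimes> y) = (-1)^{|g||x|} f x \<otimes> g y).\<close>
definition cup :: "('k::comm_ring_1, 'c::ab_group_add) dgc \<Rightarrow> ('k, 'a::ring_1) dga \<Rightarrow> int \<Rightarrow>
                   ('c \<Rightarrow> 'a) \<Rightarrow> ('c \<Rightarrow> 'a) \<Rightarrow> 'c \<Rightarrow> 'a" where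
  "cup C A n f g c = fs_ext (a_smul A)
     (\<lambda>l. \<Sum>p\<in>{p. c_proj C p (l ! 0) \<noteq> 0}. signed (n * p) (f (c_proj C p (l ! 0)) * g (l ! 1)))
     (c_Delta C c)"

definition hom_d :: "('k::comm_ring_1, 'c::ab_group_add) dgc \<Rightarrow> ('k, 'a::ring_1) dga \<Rightarrow> int \<Rightarrow>
                     ('c \<Rightarrow> 'a) \<Rightarrow> 'c \<Rightarrow> 'a" where
  "hom_d C A n f c = a_d A (f c) - signed n (f (c_d C c))"

definition hom_one :: "('k::comm_ring_1, 'c::ab_group_add) dgc \<Rightarrow> ('k, 'a::ring_1) dga \<Rightarrow> 'c \<Rightarrow> 'a" where
  "hom_one C A c = a_smul A (c_eps C c) 1"

primrec cup_pow :: "('k::comm_ring_1, 'c::ab_group_add) dgc \<Rightarrow> ('k, 'a::ring_1) dga \<Rightarrow>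
                    ('c \<Rightarrow> 'a) \<Rightarrow> nat \<Rightarrow> 'c \<Rightarrow> 'a" where
  "cup_pow C A f 0 = hom_one C A"
| "cup_pow C A f (Suc n) = cup C A 0 f (cup_pow C A f n)"

text \<open>Pointwise-finite series \<Sum>_n F n (meaningful when for each c the terms
  F n c eventually vanish).\<close>
definition series :: "(nat \<Rightarrow> 'c \<Rightarrow> 'a::ab_group_add) \<Rightarrow> 'c \<Rightarrow> 'a" where
  "series F c = (\<Sum>n < (LEAST N. \<forall>m\<ge>N. F m c = 0). F n c)"

definition twisting :: "('k::comm_ring_1, 'c::ab_group_add) dgc \<Rightarrow> ('k, 'a::ring_1) dga \<Rightarrow> ('c \<Rightarrow> 'a) \<Rightarrow> bool" where
  "twisting C A t \<longleftrightarrow>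
     hom_deg C A (-1) t \<and>
     hom_d C A (-1) t = cup C A (-1) t t \<and>
     (\<forall>c. a_eps A (t c) = 0) \<and>
     (\<forall>r. t (c_smul C r (c_unit C)) = 0)"

definition tc_homotopy :: "('k::comm_ring_1, 'c::ab_group_add) dgc \<Rightarrow> ('k, 'a::ring_1) dga \<Rightarrow>
                           ('c \<Rightarrow> 'a) \<Rightarrow> ('c \<Rightarrow> 'a) \<Rightarrow> ('c \<Rightarrow> 'a) \<Rightarrow> bool" where
  "tc_homotopy C A t u h \<longleftrightarrow>
     hom_deg C A 0 h \<and>
     hom_d C A 0 h = (\<lambda>c. cup C A 0 t h c - cup C A (-1) h u c) \<and>
     (\<forall>c. a_eps A (h c) = c_eps C c) \<and>
     (\<forall>r. h (c_smul C r (c_unit C)) = a_smul A r 1)"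

definition trivial_mod :: "('k::comm_ring_1, 'c::ab_group_add) dgc \<Rightarrow> ('k, 'a::ring_1) dga \<Rightarrow> 'a set \<Rightarrow> ('c \<Rightarrow> 'a) \<Rightarrow> bool" where
  "trivial_mod C A I h \<longleftrightarrow> (\<forall>c. h c - hom_one C A c \<in> I)"

definition triv_homotopic :: "('k::comm_ring_1, 'c::ab_group_add) dgc \<Rightarrow> ('k, 'a::ring_1) dga \<Rightarrow> 'a set \<Rightarrow>
                              ('c \<Rightarrow> 'a) \<Rightarrow> ('c \<Rightarrow> 'a) \<Rightarrow> bool" where
  "triv_homotopic C A I t u \<longleftrightarrow> (\<exists>h. tc_homotopy C A t u h \<and> trivial_mod C A I h)"

end

theory Submission
  imports Defs HOL.Modules
begin

text \<open>
All computations take place in the algebra of linear maps \<open>C \<rightarrow> A\<close> under the degree-0 cup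
product \<open>\<star>\<close> (\<open>conv\<close>), which is associative and unital by coassociativity and counitality.
On degree-0 maps the differential \<open>D f = d f - f d\<close> satisfies the twisted Leibniz rule
\<open>D (h \<star> k) = D h \<star> k + \<sigma> h \<star> D k\<close>, where \<open>\<sigma>\<close> (\<open>twist\<close>) multiplies the degree \<open>p\<close> part of
the argument by \<open>(-1)^p\<close> and is multiplicative; a homotopy \<open>h : t \<simeq> u\<close> is a degree-0 map
with \<open>D h = t \<star> h - \<sigma> h \<star> u\<close>.  Composability is then a direct computation, and if \<open>H\<close> is a
two-sided inverse of \<open>h\<close>, differentiating \<open>H \<star> h = 1\<close> gives
\<open>D H = - \<sigma> H \<star> D h \<star> H = u \<star> H - \<sigma> H \<star> t\<close>.

The inverse exists by cocompleteness: \<open>g = 1 - h\<close> vanishes on the coaugmentation, so the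
\<open>n\<close>-th power of \<open>g\<close> factors through the reduced iterated diagonal and vanishes pointwise for
large \<open>n\<close>.  Hence the geometric series \<open>H = \<Sum>\<^sub>n g^n\<close> is pointwise finite, and
\<open>h \<star> H = H \<star> h = 1\<close> by telescoping.  Triviality modulo the ideal is preserved because
\<open>h \<star> k - 1 = (h - 1) \<star> k + (k - 1)\<close> and \<open>H - 1 = \<Sum>\<^sub>n g \<star> g^n\<close>.
\<close>

section \<open>Signs and formal sums\<close>

lemma signed_zero [simp]: "signed p 0 = 0"
  by (simp add: signed_def)

lemma signed_0 [simp]: "signed 0 x = x"
  by (simp add: signed_def)

lemma signed_uminus_int: "signed (- p) x = signed p x"
  by (simp add: signed_def)

lemma signed_add: "signed p (x + y) = signed p x + signed p (y :: 'a::ab_group_add)"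
  by (simp add: signed_def)

lemma signed_mult_left: "signed p (a * b) = signed p a * (b :: 'a::ring_1)"
  by (simp add: signed_def)

lemma signed_mult: "signed (p + q) (a * b) = signed p a * signed q (b :: 'a::ring_1)"
  by (auto simp: signed_def)

lemma lookup_fs_smul: "Poly_Mapping.lookup (fs_smul r p) l = r * Poly_Mapping.lookup p l"
  by (simp add: fs_smul_def Poly_Mapping.map.rep_eq when_def)

lemma keys_fs_smul: "Poly_Mapping.keys (fs_smul r p) \<subseteq> Poly_Mapping.keys p"
  by (auto simp: in_keys_iff lookup_fs_smul)

lemma fs_ext_cong:
  "(\<And>l. l \<in> Poly_Mapping.keys p \<Longrightarrow> \<phi> l = \<psi> l) \<Longrightarrow> fs_ext sm \<phi> p = fs_ext sm \<psi> p"
  unfolding fs_ext_def by (rule sum.cong) auto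

lemma fs_ext_linear:
  assumes "\<And>x y. F (x + y) = F x + F y" and "\<And>r x. F (sm r x) = sm' r (F x)"
  shows "F (fs_ext sm \<phi> p) = fs_ext sm' (\<lambda>l. F (\<phi> l)) p"
proof -
  interpret additive F by standard (fact assms(1))
  show ?thesis unfolding fs_ext_def by (simp add: sum assms(2))
qed

context module
begin

lemma scale_signed: "scale a (signed p x) = signed p (scale a x)"
  by (simp add: signed_def)

lemma fs_ext_superset:
  assumes "finite S" "Poly_Mapping.keys p \<subseteq> S"
  shows "fs_ext scale \<phi> p = (\<Sum>l\<in>S. scale (Poly_Mapping.lookup p l) (\<phi> l))"
  unfolding fs_ext_def
  by (rule sum.mono_neutral_left) (use assms in \<open>auto simp: in_keys_iff\<close>)

lemma fs_ext_add: "fs_ext scale \<phi> (p + q) = fs_ext scale \<phi> p + fs_ext scale \<phi> q"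
proof -
  let ?S = "Poly_Mapping.keys p \<union> Poly_Mapping.keys q"
  have "fs_ext scale \<phi> (p + q) = (\<Sum>l\<in>?S. scale (Poly_Mapping.lookup (p + q) l) (\<phi> l))"
    by (rule fs_ext_superset) (auto simp: keys_add)
  also have "\<dots> = (\<Sum>l\<in>?S. scale (Poly_Mapping.lookup p l) (\<phi> l))
                + (\<Sum>l\<in>?S. scale (Poly_Mapping.lookup q l) (\<phi> l))"
    by (simp add: lookup_add scale_left_distrib sum.distrib)
  also have "\<dots> = fs_ext scale \<phi> p + fs_ext scale \<phi> q"
    by (subst (1 2) fs_ext_superset[of ?S]) auto
  finally show ?thesis .
qed

lemma fs_ext_gen [simp]: "fs_ext scale \<phi> (gen l) = \<phi> l"
  by (simp add: fs_ext_def gen_def)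

lemma fs_ext_smul: "fs_ext scale \<phi> (fs_smul r p) = scale r (fs_ext scale \<phi> p)"
proof -
  have "fs_ext scale \<phi> (fs_smul r p)
      = (\<Sum>l\<in>Poly_Mapping.keys p. scale (Poly_Mapping.lookup (fs_smul r p) l) (\<phi> l))"
    by (rule fs_ext_superset) (auto simp: keys_fs_smul[THEN subsetD])
  then show ?thesis by (simp add: lookup_fs_smul fs_ext_def scale_sum_right)
qed

lemma fs_ext_diff: "fs_ext scale \<phi> (p - q) = fs_ext scale \<phi> p - fs_ext scale \<phi> q"
  and fs_ext_sum: "fs_ext scale \<phi> (sum P I) = (\<Sum>i\<in>I. fs_ext scale \<phi> (P i))"
  and fs_ext_signed: "fs_ext scale \<phi> (signed n p) = signed n (fs_ext scale \<phi> p)"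
proof -
  interpret additive "fs_ext scale \<phi>" by standard (fact fs_ext_add)
  show "fs_ext scale \<phi> (p - q) = fs_ext scale \<phi> p - fs_ext scale \<phi> q" by (fact diff)
  show "fs_ext scale \<phi> (sum P I) = (\<Sum>i\<in>I. fs_ext scale \<phi> (P i))" by (fact sum)
  show "fs_ext scale \<phi> (signed n p) = signed n (fs_ext scale \<phi> p)" by (simp add: signed_def minus)
qed

lemma fs_ext_fadd: "fs_ext scale (\<lambda>l. \<phi> l + \<psi> l) p = fs_ext scale \<phi> p + fs_ext scale \<psi> p"
  by (simp add: fs_ext_def scale_right_distrib sum.distrib)

lemma fs_ext_fminus: "fs_ext scale (\<lambda>l. - \<phi> l) p = - fs_ext scale \<phi> p"
  by (simp add: fs_ext_def sum_negf)

lemma fs_ext_fdiff: "fs_ext scale (\<lambda>l. \<phi> l - \<psi> l) p = fs_ext scale \<phi> p - fs_ext scale \<psi> p"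
  by (simp add: fs_ext_def scale_right_diff_distrib sum_subtractf)

lemma fs_ext_fsum: "fs_ext scale (\<lambda>l. \<Sum>i\<in>I. \<phi> i l) p = (\<Sum>i\<in>I. fs_ext scale (\<phi> i) p)"
  unfolding fs_ext_def by (simp add: scale_sum_right) (rule sum.swap)

lemma fs_ext_closed:
  assumes "0 \<in> X" "\<And>x y. x \<in> X \<Longrightarrow> y \<in> X \<Longrightarrow> x + y \<in> X" "\<And>r x. x \<in> X \<Longrightarrow> scale r x \<in> X"
    and "\<And>l. l \<in> Poly_Mapping.keys p \<Longrightarrow> \<phi> l \<in> X"
  shows "fs_ext scale \<phi> p \<in> X"
proof -
  have "(\<Sum>l\<in>S. scale (Poly_Mapping.lookup p l) (\<phi> l)) \<in> X"
    if "finite S" "S \<subseteq> Poly_Mapping.keys p" for S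
    using that by (induction S rule: finite_induct) (auto intro: assms)
  then show ?thesis unfolding fs_ext_def by simp
qed

lemma fs_ext_fs_ext:
  "fs_ext scale \<phi> (fs_ext fs_smul \<psi> p) = fs_ext scale (\<lambda>l. fs_ext scale \<phi> (\<psi> l)) p"
  unfolding fs_ext_def[of fs_smul] by (simp add: fs_ext_sum fs_ext_smul fs_ext_def[of scale _ p])

lemma fs_ext_tnull:
  assumes "\<And>xs x y ys. \<phi> (xs @ (x + y) # ys) = \<phi> (xs @ x # ys) + \<phi> (xs @ y # ys)"
    and "\<And>xs r x ys. \<phi> (xs @ sm r x # ys) = scale r (\<phi> (xs @ x # ys))"
    and "q \<in> tnull sm"
  shows "fs_ext scale \<phi> q = 0"
  using assms(3)
proof induction
  case tn_zero then show ?case by (simp add: fs_ext_def)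
next
  case (tn_add a b) then show ?case by (simp add: fs_ext_add)
next
  case (tn_smul a r) then show ?case by (simp add: fs_ext_smul)
next
  case (tn_additive xs x y ys) then show ?case by (simp add: fs_ext_diff assms(1))
next
  case (tn_homog xs r x ys) then show ?case by (simp add: fs_ext_diff fs_ext_smul assms(2))
qed

lemma fs_ext_teq:
  assumes "\<And>xs x y ys. \<phi> (xs @ (x + y) # ys) = \<phi> (xs @ x # ys) + \<phi> (xs @ y # ys)"
    and "\<And>xs r x ys. \<phi> (xs @ sm r x # ys) = scale r (\<phi> (xs @ x # ys))"
    and "teq sm p q"
  shows "fs_ext scale \<phi> p = fs_ext scale \<phi> q"
  using fs_ext_tnull[OF assms(1,2), of "p - q"] assms(3) by (simp add: teq_def fs_ext_diff)

end

lemma length2E: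
  assumes "length l = 2" obtains a b where "l = [a, b]"
  using assms by (auto simp: length_Suc_conv numeral_2_eq_2)

lemma append_Cons_length2_cases:
  obtains (left) b where "xs = []" "ys = [b]" | (right) a where "xs = [a]" "ys = []"
    | (other) "length xs + length ys \<noteq> 1"
  by (cases xs; cases ys) (auto simp: length_Suc_conv)

lemma append_Cons_length3_cases:
  obtains (left) b c where "xs = []" "ys = [b, c]" | (middle) a c where "xs = [a]" "ys = [c]"
    | (right) a b where "xs = [a, b]" "ys = []" | (other) "length xs + length ys \<noteq> 2"
  by (cases xs; cases ys) (auto simp: length_Suc_conv numeral_2_eq_2)

lemma eventually_series_eq:
  assumes "\<exists>N. \<forall>m\<ge>N. F m c = 0"
  shows "\<forall>\<^sub>F M in sequentially. series F c = (\<Sum>n<M. F n c)"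
proof -
  define L where "L = (LEAST N. \<forall>m\<ge>N. F m c = 0)"
  have "\<forall>m\<ge>L. F m c = 0" unfolding L_def using assms by (rule LeastI_ex)
  then have "series F c = (\<Sum>n<M. F n c)" if "L \<le> M" for M
    unfolding series_def L_def[symmetric]
    by (intro sum.mono_neutral_left) (use that in auto)
  then show ?thesis unfolding eventually_sequentially by blast
qed

section \<open>The convolution algebra\<close>

locale hom_dga =
  fixes A :: "('k::comm_ring_1, 'a::ring_1) dga" and C :: "('k, 'c::ab_group_add) dgc"
  assumes aug: "aug_dga A" and coaug: "coaug_dgc C"
begin

abbreviation "smA \<equiv> a_smul A"
abbreviation "prA \<equiv> a_proj A"
abbreviation "dA \<equiv> a_d A"
abbreviation "epsA \<equiv> a_eps A"
abbreviation "smC \<equiv> c_smul C"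
abbreviation "prC \<equiv> c_proj C"
abbreviation "dC \<equiv> c_d C"
abbreviation "Delta \<equiv> c_Delta C"
abbreviation "epsC \<equiv> c_eps C"
abbreviation "unitC \<equiv> c_unit C"
abbreviation "one \<equiv> hom_one C A"
abbreviation "D \<equiv> hom_d C A 0"

sublocale mA: module smA
  using aug by unfold_locales (simp_all add: aug_dga_def module_ax_def)

sublocale mC: module smC
  using coaug by unfold_locales (simp_all add: coaug_dgc_def module_ax_def)

lemma smA_mult_left: "smA r (a * b) = smA r a * b"
  using aug by (simp add: aug_dga_def)

lemma smA_mult_right: "smA r (a * b) = a * smA r b"
  using aug unfolding aug_dga_def by blast

lemma prA_add: "prA p (x + y) = prA p x + prA p y"
  using aug by (simp add: aug_dga_def graded_ax_def)

lemma prA_smul: "prA p (smA r x) = smA r (prA p x)"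
  using aug by (simp add: aug_dga_def graded_ax_def)

lemma homogA_zero: "homog prA p 0"
  using additive.zero[of "prA p"] by (simp add: homog_def additive_def prA_add)

lemma homogA_add: "homog prA p x \<Longrightarrow> homog prA p y \<Longrightarrow> homog prA p (x + y)"
  by (simp add: homog_def prA_add)

lemma homogA_diff: "homog prA p x \<Longrightarrow> homog prA p y \<Longrightarrow> homog prA p (x - y)"
  using additive.diff[of "prA p"] by (simp add: homog_def additive_def prA_add)

lemma homogA_smul: "homog prA p x \<Longrightarrow> homog prA p (smA r x)"
  by (simp add: homog_def prA_smul)

lemma homogA_sum: "(\<And>i. i \<in> S \<Longrightarrow> homog prA p (f i)) \<Longrightarrow> homog prA p (sum f S)"
  by (induction S rule: infinite_finite_induct) (simp_all add: homogA_zero homogA_add)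

lemma homogA_mult: "homog prA p a \<Longrightarrow> homog prA q b \<Longrightarrow> homog prA (p + q) (a * b)"
  using aug by (simp add: aug_dga_def)

lemma homogA_one: "homog prA 0 1"
  using aug by (simp add: aug_dga_def)

lemma prC_add: "prC p (x + y) = prC p x + prC p y"
  using coaug by (simp add: coaug_dgc_def graded_ax_def)

lemma prC_smul: "prC p (smC r x) = smC r (prC p x)"
  using coaug by (simp add: coaug_dgc_def graded_ax_def)

lemma prC_prC: "prC p (prC q x) = (if p = q then prC q x else 0)"
  using coaug by (simp add: coaug_dgc_def graded_ax_def)

lemma finite_prC [simp]: "finite {p. prC p x \<noteq> 0}"
  using coaug by (simp add: coaug_dgc_def graded_ax_def)

lemma sum_prC: "(\<Sum>p\<in>{p. prC p x \<noteq> 0}. prC p x) = x"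
  using coaug by (simp add: coaug_dgc_def graded_ax_def)

lemma homogC_prC: "homog prC p (prC p x)"
  by (simp add: homog_def prC_prC)

lemma dA_add: "dA (x + y) = dA x + dA y"
  using aug by (simp add: aug_dga_def deg_map_def)

lemma dA_smul: "dA (smA r x) = smA r (dA x)"
  using aug by (simp add: aug_dga_def deg_map_def)

lemma dA_mult: "homog prA p a \<Longrightarrow> dA (a * b) = dA a * b + signed p (a * dA b)"
  using aug by (simp add: aug_dga_def)

lemma dA_one: "dA 1 = 0"
  using dA_mult[OF homogA_one, of 1] by simp

lemma dC_add: "dC (x + y) = dC x + dC y"
  using coaug by (simp add: coaug_dgc_def deg_map_def)

lemma dC_smul: "dC (smC r x) = smC r (dC x)"
  using coaug by (simp add: coaug_dgc_def deg_map_def)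

lemma epsA_add: "epsA (a + b) = epsA a + epsA b"
  and epsA_smul: "epsA (smA r a) = r * epsA a"
  and epsA_mult: "epsA (a * b) = epsA a * epsA b"
  and epsA_one: "epsA 1 = 1"
  using aug by (simp_all add: aug_dga_def)

lemma epsC_add: "epsC (a + b) = epsC a + epsC b"
  and epsC_smul: "epsC (smC r a) = r * epsC a"
  and epsC_prC: "p \<noteq> 0 \<Longrightarrow> epsC (prC p a) = 0"
  and epsC_dC: "epsC (dC a) = 0"
  and epsC_unit: "epsC unitC = 1"
  using coaug by (simp_all add: coaug_dgc_def)

lemma length_Delta: "l \<in> Poly_Mapping.keys (Delta x) \<Longrightarrow> length l = 2"
  using coaug by (simp add: coaug_dgc_def)

lemma keys_DeltaE:
  assumes "l \<in> Poly_Mapping.keys (Delta x)" obtains a b where "l = [a, b]"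
  using length_Delta[OF assms] by (rule length2E)

lemma Delta_add: "teq smC (Delta (x + y)) (Delta x + Delta y)"
  and Delta_smul: "teq smC (Delta (smC r x)) (fs_smul r (Delta x))"
  and Delta_coassoc:
    "teq smC (fs_ext fs_smul (Delta_left C) (Delta x)) (fs_ext fs_smul (Delta_right C) (Delta x))"
  and Delta_dC: "teq smC (Delta (dC x)) (fs_ext fs_smul (d_tensor2 C) (Delta x))"
  and Delta_unit: "teq smC (Delta unitC) (gen [unitC, unitC])"
  using coaug by (simp_all add: coaug_dgc_def)

lemma Delta_graded: "homog prC n x \<Longrightarrow> \<exists>q. teq smC (Delta x) q \<and> graded_tensor prC n q"
  using coaug by (simp add: coaug_dgc_def)

lemma counit_left: "fs_ext smC (\<lambda>l. smC (epsC (l ! 0)) (l ! 1)) (Delta x) = x"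
  and counit_right: "fs_ext smC (\<lambda>l. smC (epsC (l ! 1)) (l ! 0)) (Delta x) = x"
  using coaug by (simp_all add: coaug_dgc_def)

lemma graded_tensor_length2E:
  assumes "graded_tensor prC n q" "[a, b] \<in> Poly_Mapping.keys q"
  obtains p q where "homog prC p a" "homog prC q b" "p + q = n"
proof -
  obtain ds where ds: "length ds = length [a, b]" "\<forall>i<length [a, b]. homog prC (ds ! i) ([a, b] ! i)"
    "sum_list ds = n"
    using assms unfolding graded_tensor_def by blast
  have "length ds = 2" using ds(1) by simp
  then obtain p q where "ds = [p, q]" by (rule length2E)
  then show ?thesis using ds that by (auto simp: less_Suc_eq numeral_2_eq_2)
qed

lemma epsC_eq_epsC_prC0: "epsC x = epsC (prC 0 x)"
proof -
  interpret additive epsC by standard (fact epsC_add)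
  have "epsC x = (\<Sum>p\<in>{p. prC p x \<noteq> 0}. epsC (prC p x))"
    by (subst (1) sum_prC[symmetric]) (fact sum)
  also have "\<dots> = (\<Sum>p\<in>{p. prC p x \<noteq> 0} \<inter> {0}. epsC (prC p x))"
    by (rule sum.mono_neutral_right) (use epsC_prC in auto)
  also have "\<dots> = epsC (prC 0 x)"
    by (cases "prC 0 x = 0") (auto simp: zero)
  finally show ?thesis .
qed

definition lin :: "('c \<Rightarrow> 'a) \<Rightarrow> bool" where
  "lin f \<longleftrightarrow> (\<forall>x y. f (x + y) = f x + f y) \<and> (\<forall>r x. f (smC r x) = smA r (f x))"

lemma lin_add: "lin f \<Longrightarrow> f (x + y) = f x + f y"
  and lin_smul: "lin f \<Longrightarrow> f (smC r x) = smA r (f x)"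
  by (simp_all add: lin_def)

lemma lin_zero: "lin f \<Longrightarrow> f 0 = 0"
  and lin_diff: "lin f \<Longrightarrow> f (x - y) = f x - f y"
  and lin_sum: "lin f \<Longrightarrow> f (sum g S) = (\<Sum>i\<in>S. f (g i))"
  using additive.zero additive.diff additive.sum by (metis additive.intro lin_add)+

lemma lin_fdiff: "lin f \<Longrightarrow> lin g \<Longrightarrow> lin (\<lambda>x. f x - g x)"
  by (simp add: lin_def mA.scale_right_diff_distrib)

lemma lin_hom_deg: "hom_deg C A n f \<Longrightarrow> lin f"
  by (simp add: hom_deg_def deg_map_def lin_def)

lemma hom_deg0_iff: "hom_deg C A 0 f \<longleftrightarrow> lin f \<and> (\<forall>p x. homog prC p x \<longrightarrow> homog prA p (f x))"
  by (simp add: hom_deg_def deg_map_def lin_def)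

lemma one_apply: "one x = smA (epsC x) 1"
  by (simp add: hom_one_def)

lemma lin_one: "lin one"
  by (simp add: lin_def one_apply epsC_add epsC_smul mA.scale_left_distrib)

lemma hom_deg0_one: "hom_deg C A 0 one"
proof -
  have "homog prA p (one x)" if "homog prC p x" for p x
  proof (cases "p = 0")
    case True then show ?thesis by (simp add: one_apply homogA_smul homogA_one)
  next
    case False
    then have "epsC x = 0" using epsC_prC[OF False, of x] that by (simp add: homog_def)
    then show ?thesis by (simp add: one_apply homogA_zero)
  qed
  then show ?thesis by (simp add: hom_deg0_iff lin_one)
qed

definition tensor2 :: "('c \<Rightarrow> 'a) \<Rightarrow> ('c \<Rightarrow> 'a) \<Rightarrow> 'c list \<Rightarrow> 'a" where
  "tensor2 f g l = (if length l = 2 then f (l ! 0) * g (l ! 1) else 0)"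

lemma tensor2_simp [simp]: "tensor2 f g [a, b] = f a * g b"
  by (simp add: tensor2_def)

lemma tensor2_multilinear:
  assumes f: "lin f" and g: "lin g"
  shows "tensor2 f g (xs @ (x + y) # ys) = tensor2 f g (xs @ x # ys) + tensor2 f g (xs @ y # ys)"
    and "tensor2 f g (xs @ smC r x # ys) = smA r (tensor2 f g (xs @ x # ys))"
proof -
  show "tensor2 f g (xs @ (x + y) # ys) = tensor2 f g (xs @ x # ys) + tensor2 f g (xs @ y # ys)"
    by (cases xs ys rule: append_Cons_length2_cases)
      (simp_all add: tensor2_def lin_add[OF f] lin_add[OF g] distrib_left distrib_right)
  show "tensor2 f g (xs @ smC r x # ys) = smA r (tensor2 f g (xs @ x # ys))"
    by (cases xs ys rule: append_Cons_length2_cases)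
      (simp_all add: tensor2_def lin_smul[OF f] lin_smul[OF g] smA_mult_left[symmetric]
        smA_mult_right[symmetric])
qed

lemma fs_ext_tensor2_teq:
  "lin f \<Longrightarrow> lin g \<Longrightarrow> teq smC p q \<Longrightarrow> fs_ext smA (tensor2 f g) p = fs_ext smA (tensor2 f g) q"
  by (rule mA.fs_ext_teq) (simp_all add: tensor2_multilinear)

definition conv :: "('c \<Rightarrow> 'a) \<Rightarrow> ('c \<Rightarrow> 'a) \<Rightarrow> 'c \<Rightarrow> 'a" where
  "conv f g c = fs_ext smA (tensor2 f g) (Delta c)"

lemma cup0_eq: assumes "lin f" shows "cup C A 0 f g = conv f g"
proof
  fix c
  show "cup C A 0 f g c = conv f g c"
    unfolding cup_def conv_def
  proof (rule fs_ext_cong)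
    fix l assume "l \<in> Poly_Mapping.keys (Delta c)"
    then obtain a b where l: "l = [a, b]" by (rule keys_DeltaE)
    have "f a = (\<Sum>p\<in>{p. prC p a \<noteq> 0}. f (prC p a))"
      by (subst (1) sum_prC[symmetric]) (rule lin_sum[OF assms])
    then show "(\<Sum>p\<in>{p. prC p (l ! 0) \<noteq> 0}. signed (0 * p) (f (prC p (l ! 0)) * g (l ! 1)))
        = tensor2 f g l"
      by (simp add: l sum_distrib_right)
  qed
qed

lemma lin_conv: assumes "lin f" "lin g" shows "lin (conv f g)"
  unfolding lin_def conv_def
  by (simp only: fs_ext_tensor2_teq[OF assms Delta_add] fs_ext_tensor2_teq[OF assms Delta_smul]
      mA.fs_ext_add mA.fs_ext_smul simp_thms)

lemma conv_cong:
  assumes "\<And>l. l \<in> Poly_Mapping.keys (Delta c) \<Longrightarrow> f (l ! 0) = f' (l ! 0) \<and> g (l ! 1) = g' (l ! 1)"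
  shows "conv f g c = conv f' g' c"
  unfolding conv_def by (rule fs_ext_cong) (use assms in \<open>auto simp: tensor2_def\<close>)

lemma conv_diff_left: "conv (\<lambda>x. f x - f' x) g c = conv f g c - conv f' g c"
  unfolding conv_def
  by (simp add: mA.fs_ext_fdiff[symmetric]) (rule fs_ext_cong, simp add: tensor2_def left_diff_distrib)

lemma conv_diff_right: "conv f (\<lambda>x. g x - g' x) c = conv f g c - conv f g' c"
  unfolding conv_def
  by (simp add: mA.fs_ext_fdiff[symmetric]) (rule fs_ext_cong, simp add: tensor2_def right_diff_distrib)

lemma conv_minus_left: "conv (\<lambda>x. - f x) g c = - conv f g c"
  unfolding conv_def
  by (simp add: mA.fs_ext_fminus[symmetric]) (rule fs_ext_cong, simp add: tensor2_def)

lemma conv_sum_left: "conv (\<lambda>x. \<Sum>i\<in>I. f i x) g c = (\<Sum>i\<in>I. conv (f i) g c)"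
  unfolding conv_def
  by (simp add: mA.fs_ext_fsum[symmetric]) (rule fs_ext_cong, simp add: tensor2_def sum_distrib_right)

lemma conv_sum_right: "conv f (\<lambda>x. \<Sum>i\<in>I. g i x) c = (\<Sum>i\<in>I. conv f (g i) c)"
  unfolding conv_def
  by (simp add: mA.fs_ext_fsum[symmetric]) (rule fs_ext_cong, simp add: tensor2_def sum_distrib_left)

lemma conv_one_left: assumes "lin g" shows "conv one g c = g c"
proof -
  have "conv one g c = fs_ext smA (\<lambda>l. g (smC (epsC (l ! 0)) (l ! 1))) (Delta c)"
    unfolding conv_def
    by (rule fs_ext_cong)
      (auto elim!: length2E dest!: length_Delta
        simp: one_apply lin_smul[OF assms] smA_mult_left[symmetric])
  also have "\<dots> = g (fs_ext smC (\<lambda>l. smC (epsC (l ! 0)) (l ! 1)) (Delta c))"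
    by (rule fs_ext_linear[symmetric]) (simp_all add: lin_add[OF assms] lin_smul[OF assms])
  finally show ?thesis by (simp only: counit_left)
qed

lemma conv_one_right: assumes "lin g" shows "conv g one c = g c"
proof -
  have "conv g one c = fs_ext smA (\<lambda>l. g (smC (epsC (l ! 1)) (l ! 0))) (Delta c)"
    unfolding conv_def
    by (rule fs_ext_cong)
      (auto elim!: length2E dest!: length_Delta
        simp: one_apply lin_smul[OF assms] smA_mult_right[symmetric])
  also have "\<dots> = g (fs_ext smC (\<lambda>l. smC (epsC (l ! 1)) (l ! 0)) (Delta c))"
    by (rule fs_ext_linear[symmetric]) (simp_all add: lin_add[OF assms] lin_smul[OF assms])
  finally show ?thesis by (simp only: counit_right)
qed

lemma conv_unit: "lin f \<Longrightarrow> lin g \<Longrightarrow> conv f g unitC = f unitC * g unitC"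
  unfolding conv_def using fs_ext_tensor2_teq[OF _ _ Delta_unit] by simp

lemma epsA_conv:
  assumes f: "lin f" and g: "\<And>x. epsA (g x) = epsC x"
  shows "epsA (conv f g c) = epsA (f c)"
proof -
  have "epsA (conv f g c) = fs_ext (*) (\<lambda>l. epsA (tensor2 f g l)) (Delta c)"
    unfolding conv_def by (rule fs_ext_linear) (simp_all add: epsA_add epsA_smul)
  also have "\<dots> = fs_ext (*) (\<lambda>l. epsA (f (smC (epsC (l ! 1)) (l ! 0)))) (Delta c)"
    by (rule fs_ext_cong)
      (auto elim!: length2E dest!: length_Delta
        simp: epsA_mult g lin_smul[OF f] epsA_smul mult.commute)
  also have "\<dots> = epsA (f (fs_ext smC (\<lambda>l. smC (epsC (l ! 1)) (l ! 0)) (Delta c)))"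
    by (rule fs_ext_linear[where F = "\<lambda>z. epsA (f z)", symmetric])
      (simp_all add: lin_add[OF f] lin_smul[OF f] epsA_add epsA_smul)
  finally show ?thesis by (simp only: counit_right)
qed

definition tensor3 :: "('c \<Rightarrow> 'a) \<Rightarrow> ('c \<Rightarrow> 'a) \<Rightarrow> ('c \<Rightarrow> 'a) \<Rightarrow> 'c list \<Rightarrow> 'a" where
  "tensor3 f g k l = (if length l = 3 then f (l ! 0) * g (l ! 1) * k (l ! 2) else 0)"

lemma tensor3_multilinear:
  assumes f: "lin f" and g: "lin g" and k: "lin k"
  shows "tensor3 f g k (xs @ (x + y) # ys)
      = tensor3 f g k (xs @ x # ys) + tensor3 f g k (xs @ y # ys)"
    and "tensor3 f g k (xs @ smC r x # ys) = smA r (tensor3 f g k (xs @ x # ys))"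
proof -
  show "tensor3 f g k (xs @ (x + y) # ys)
      = tensor3 f g k (xs @ x # ys) + tensor3 f g k (xs @ y # ys)"
    by (cases xs ys rule: append_Cons_length3_cases)
      (simp_all add: tensor3_def lin_add[OF f] lin_add[OF g] lin_add[OF k] distrib_left distrib_right)
  show "tensor3 f g k (xs @ smC r x # ys) = smA r (tensor3 f g k (xs @ x # ys))"
    by (cases xs ys rule: append_Cons_length3_cases)
      (simp_all add: tensor3_def lin_smul[OF f] lin_smul[OF g] lin_smul[OF k]
        smA_mult_left[symmetric] smA_mult_right[symmetric])
qed

text \<open>Both bracketings evaluate \<open>f \<otimes> g \<otimes> k\<close> on the two iterated diagonals, which
  coassociativity identifies modulo multilinearity.\<close>

lemma conv_assoc:
  assumes f: "lin f" and g: "lin g" and k: "lin k"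
  shows "conv (conv f g) k c = conv f (conv g k) c"
proof -
  have "conv (conv f g) k c = fs_ext smA (tensor3 f g k) (fs_ext fs_smul (Delta_left C) (Delta c))"
    unfolding conv_def[of "conv f g"] mA.fs_ext_fs_ext
  proof (rule fs_ext_cong)
    fix l assume "l \<in> Poly_Mapping.keys (Delta c)"
    then obtain w z where l: "l = [w, z]" by (rule keys_DeltaE)
    have "conv f g w * k z = fs_ext smA (\<lambda>m. tensor2 f g m * k z) (Delta w)"
      unfolding conv_def by (rule fs_ext_linear) (auto simp: distrib_right smA_mult_left)
    also have "\<dots> = fs_ext smA (\<lambda>m. tensor3 f g k (m @ [z])) (Delta w)"
      by (rule fs_ext_cong) (auto dest!: length_Delta elim!: length2E simp: tensor3_def)
    finally show "tensor2 (conv f g) k l = fs_ext smA (tensor3 f g k) (Delta_left C l)"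
      by (simp add: l Delta_left_def mA.fs_ext_fs_ext)
  qed
  also have "\<dots> = fs_ext smA (tensor3 f g k) (fs_ext fs_smul (Delta_right C) (Delta c))"
    by (rule mA.fs_ext_teq[OF _ _ Delta_coassoc]) (simp_all add: tensor3_multilinear[OF f g k])
  also have "\<dots> = conv f (conv g k) c"
    unfolding conv_def[of f] mA.fs_ext_fs_ext
  proof (rule fs_ext_cong)
    fix l assume "l \<in> Poly_Mapping.keys (Delta c)"
    then obtain w z where l: "l = [w, z]" by (rule keys_DeltaE)
    have "f w * conv g k z = fs_ext smA (\<lambda>m. f w * tensor2 g k m) (Delta z)"
      unfolding conv_def by (rule fs_ext_linear) (auto simp: distrib_left smA_mult_right)
    also have "\<dots> = fs_ext smA (\<lambda>m. tensor3 f g k (w # m)) (Delta z)"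
      by (rule fs_ext_cong) (auto dest!: length_Delta elim!: length2E simp: tensor3_def mult.assoc)
    finally show "fs_ext smA (tensor3 f g k) (Delta_right C l) = tensor2 f (conv g k) l"
      by (simp add: l Delta_right_def mA.fs_ext_fs_ext)
  qed
  finally show ?thesis .
qed

lemma hom_deg0_conv:
  assumes f: "hom_deg C A 0 f" and g: "hom_deg C A 0 g"
  shows "hom_deg C A 0 (conv f g)"
proof -
  have lf: "lin f" and lg: "lin g"
    and hf: "\<And>p x. homog prC p x \<Longrightarrow> homog prA p (f x)"
    and hg: "\<And>p x. homog prC p x \<Longrightarrow> homog prA p (g x)"
    using f g by (simp_all add: hom_deg0_iff)
  have "homog prA p (conv f g x)" if x: "homog prC p x" for p x
  proof -
    obtain q where q: "teq smC (Delta x) q" "graded_tensor prC p q"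
      using Delta_graded[OF x] by blast
    have "conv f g x = fs_ext smA (tensor2 f g) q"
      unfolding conv_def by (rule fs_ext_tensor2_teq[OF lf lg q(1)])
    also have "\<dots> \<in> {y. homog prA p y}"
    proof (rule mA.fs_ext_closed)
      fix l assume l: "l \<in> Poly_Mapping.keys q"
      show "tensor2 f g l \<in> {y. homog prA p y}"
      proof (cases "length l = 2")
        case True
        then obtain a b where ab: "l = [a, b]" by (rule length2E)
        obtain d1 d2 where "homog prC d1 a" "homog prC d2 b" "d1 + d2 = p"
          using graded_tensor_length2E q(2) l ab by metis
        then show ?thesis using homogA_mult[OF hf hg] by (auto simp: ab)
      qed (simp add: tensor2_def homogA_zero)
    qed (auto simp: homogA_zero homogA_add homogA_smul)
    finally show ?thesis by simp
  qed
  then show ?thesis using lin_conv[OF lf lg] by (simp add: hom_deg0_iff)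
qed

definition twist :: "('c \<Rightarrow> 'a) \<Rightarrow> 'c \<Rightarrow> 'a" where
  "twist f x = (\<Sum>p\<in>{p. prC p x \<noteq> 0}. signed p (f (prC p x)))"

lemma twist_superset:
  assumes "lin f" "finite S" "{p. prC p x \<noteq> 0} \<subseteq> S"
  shows "twist f x = (\<Sum>p\<in>S. signed p (f (prC p x)))"
  unfolding twist_def by (rule sum.mono_neutral_left) (use assms lin_zero[OF assms(1)] in auto)

lemma lin_twist: assumes "lin f" shows "lin (twist f)"
proof -
  have "twist f (x + y) = twist f x + twist f y" for x y
  proof -
    let ?S = "{p. prC p x \<noteq> 0} \<union> {p. prC p y \<noteq> 0}"
    have "twist f (x + y) = (\<Sum>p\<in>?S. signed p (f (prC p (x + y))))"
      by (rule twist_superset[OF assms]) (auto simp: prC_add)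
    also have "\<dots> = (\<Sum>p\<in>?S. signed p (f (prC p x))) + (\<Sum>p\<in>?S. signed p (f (prC p y)))"
      by (simp add: prC_add lin_add[OF assms] signed_add sum.distrib)
    also have "\<dots> = twist f x + twist f y"
      by (simp add: twist_superset[OF assms, of ?S])
    finally show ?thesis .
  qed
  moreover have "twist f (smC r x) = smA r (twist f x)" for r x
  proof -
    have "twist f (smC r x) = (\<Sum>p\<in>{p. prC p x \<noteq> 0}. signed p (f (prC p (smC r x))))"
      by (rule twist_superset[OF assms]) (auto simp: prC_smul)
    then show ?thesis
      by (simp add: prC_smul lin_smul[OF assms] mA.scale_signed mA.scale_sum_right twist_def)
  qed
  ultimately show ?thesis by (simp add: lin_def)
qed

lemma twist_homog: assumes "lin f" "homog prC d x" shows "twist f x = signed d (f x)"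
proof -
  have "{p. prC p x \<noteq> 0} \<subseteq> {d}"
    using assms(2) by (auto simp: homog_def prC_prC dest: arg_cong[where f = "prC _"] split: if_splits)
  then have "twist f x = (\<Sum>p\<in>{d}. signed p (f (prC p x)))"
    by (intro twist_superset[OF assms(1)]) simp_all
  then show ?thesis using assms(2) by (simp add: homog_def)
qed

lemma twist_one: "twist one = one"
proof
  fix x
  let ?S = "{p. prC p x \<noteq> 0} \<union> {0}"
  have "twist one x = (\<Sum>p\<in>?S. signed p (one (prC p x)))"
    by (rule twist_superset[OF lin_one]) auto
  also have "\<dots> = (\<Sum>p\<in>{0}. signed p (one (prC p x)))"
    by (rule sum.mono_neutral_right) (auto simp: one_apply epsC_prC)
  also have "\<dots> = one x" by (simp add: one_apply epsC_eq_epsC_prC0[of x, symmetric])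
  finally show "twist one x = one x" .
qed

lemma cup_minus1_eq: "cup C A (-1) f g = conv (twist f) g"
proof
  fix c
  show "cup C A (-1) f g c = conv (twist f) g c"
    unfolding cup_def conv_def
  proof (rule fs_ext_cong)
    fix l assume "l \<in> Poly_Mapping.keys (Delta c)"
    then obtain a b where l: "l = [a, b]" by (rule keys_DeltaE)
    show "(\<Sum>p\<in>{p. prC p (l ! 0) \<noteq> 0}. signed (-1 * p) (f (prC p (l ! 0)) * g (l ! 1)))
        = tensor2 (twist f) g l"
      by (simp add: l twist_def sum_distrib_right signed_uminus_int signed_mult_left)
  qed
qed

lemma twist_conv:
  assumes f: "lin f" and g: "lin g"
  shows "twist (conv f g) = conv (twist f) (twist g)"
proof
  fix c
  have homogeneous: "signed p (conv f g x) = conv (twist f) (twist g) x" if x: "homog prC p x" for p x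
  proof -
    obtain q where q: "teq smC (Delta x) q" "graded_tensor prC p q"
      using Delta_graded[OF x] by blast
    have "signed p (conv f g x) = fs_ext smA (\<lambda>l. signed p (tensor2 f g l)) q"
      unfolding conv_def fs_ext_tensor2_teq[OF f g q(1)]
      by (rule fs_ext_linear) (simp_all add: signed_add signed_def)
    also have "\<dots> = fs_ext smA (tensor2 (twist f) (twist g)) q"
    proof (rule fs_ext_cong)
      fix l assume l: "l \<in> Poly_Mapping.keys q"
      show "signed p (tensor2 f g l) = tensor2 (twist f) (twist g) l"
      proof (cases "length l = 2")
        case True
        then obtain a b where ab: "l = [a, b]" by (rule length2E)
        obtain d1 d2 where d: "homog prC d1 a" "homog prC d2 b" "d1 + d2 = p"
          using graded_tensor_length2E q(2) l ab by metis
        show ?thesis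
          using signed_mult[of d1 d2 "f a" "g b"]
          by (simp add: ab d(3)[symmetric] twist_homog[OF f d(1)] twist_homog[OF g d(2)])
      qed (simp add: tensor2_def)
    qed
    also have "\<dots> = conv (twist f) (twist g) x"
      unfolding conv_def by (simp add: fs_ext_tensor2_teq[OF lin_twist[OF f] lin_twist[OF g] q(1)])
    finally show ?thesis .
  qed
  have "twist (conv f g) c = (\<Sum>p\<in>{p. prC p c \<noteq> 0}. conv (twist f) (twist g) (prC p c))"
    by (simp add: twist_def homogeneous[OF homogC_prC])
  also have "\<dots> = conv (twist f) (twist g) c"
    by (simp add: lin_sum[OF lin_conv[OF lin_twist[OF f] lin_twist[OF g]], symmetric] sum_prC)
  finally show "twist (conv f g) c = conv (twist f) (twist g) c" .
qed

lemma D_apply: "D f c = dA (f c) - f (dC c)"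
  by (simp add: hom_d_def)

lemma lin_D: "lin f \<Longrightarrow> lin (D f)"
  by (simp add: lin_def D_apply dA_add dC_add dA_smul dC_smul mA.scale_right_diff_distrib)

lemma D_one: "D one = (\<lambda>c. 0)"
  by (simp add: fun_eq_iff D_apply one_apply dA_smul dA_one epsC_dC)

lemma D_tensor2:
  assumes h: "lin h" and hh: "\<And>p x. homog prC p x \<Longrightarrow> homog prA p (h x)"
  shows "dA (h a * k b) - fs_ext smA (tensor2 h k) (d_tensor2 C [a, b])
    = D h a * k b + twist h a * D k b"
proof -
  let ?S = "{p. prC p a \<noteq> 0}"
  have ha: "h a = (\<Sum>p\<in>?S. h (prC p a))"
    by (subst (1) sum_prC[symmetric]) (rule lin_sum[OF h])
  interpret dA: additive dA by standard (fact dA_add)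
  have "dA (h a * k b) = (\<Sum>p\<in>?S. dA (h (prC p a) * k b))"
    by (subst ha) (simp add: sum_distrib_right dA.sum)
  also have "\<dots> = (\<Sum>p\<in>?S. dA (h (prC p a)) * k b + signed p (h (prC p a) * dA (k b)))"
    by (rule sum.cong[OF refl], rule dA_mult, rule hh, rule homogC_prC)
  also have "\<dots> = dA (h a) * k b + twist h a * dA (k b)"
    by (simp add: ha dA.sum twist_def sum.distrib sum_distrib_right signed_mult_left)
  moreover have "fs_ext smA (tensor2 h k) (d_tensor2 C [a, b]) = h (dC a) * k b + twist h a * k (dC b)"
    by (simp add: d_tensor2_def mA.fs_ext_add mA.fs_ext_sum mA.fs_ext_signed twist_def
        sum_distrib_right signed_mult_left)
  ultimately show ?thesis by (simp add: D_apply algebra_simps)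
qed

lemma D_conv:
  assumes h: "lin h" and hh: "\<And>p x. homog prC p x \<Longrightarrow> homog prA p (h x)" and k: "lin k"
  shows "D (conv h k) c = conv (D h) k c + conv (twist h) (D k) c"
proof -
  have "dA (conv h k c) = fs_ext smA (\<lambda>l. dA (tensor2 h k l)) (Delta c)"
    unfolding conv_def by (rule fs_ext_linear) (simp_all add: dA_add dA_smul)
  moreover have "conv h k (dC c) = fs_ext smA (\<lambda>l. fs_ext smA (tensor2 h k) (d_tensor2 C l)) (Delta c)"
    unfolding conv_def fs_ext_tensor2_teq[OF h k Delta_dC] by (simp add: mA.fs_ext_fs_ext)
  ultimately have "D (conv h k) c = fs_ext smA
      (\<lambda>l. dA (tensor2 h k l) - fs_ext smA (tensor2 h k) (d_tensor2 C l)) (Delta c)"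
    by (simp add: D_apply mA.fs_ext_fdiff)
  also have "\<dots> = fs_ext smA (\<lambda>l. tensor2 (D h) k l + tensor2 (twist h) (D k) l) (Delta c)"
    by (rule fs_ext_cong) (auto dest!: length_Delta elim!: length2E simp: D_tensor2[OF h hh])
  finally show ?thesis by (simp add: mA.fs_ext_fadd conv_def)
qed

section \<open>Twisting cochain homotopies\<close>

lemma tc_homotopy_iff:
  assumes "lin t"
  shows "tc_homotopy C A t u h \<longleftrightarrow> hom_deg C A 0 h
    \<and> D h = (\<lambda>c. conv t h c - conv (twist h) u c)
    \<and> (\<forall>c. epsA (h c) = epsC c) \<and> h unitC = 1"
proof -
  have "(\<forall>r. h (smC r unitC) = smA r 1) \<longleftrightarrow> h unitC = 1" if "lin h"
    using that by (metis mA.scale_one lin_smul)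
  then show ?thesis
    by (auto simp: tc_homotopy_def cup0_eq[OF assms] cup_minus1_eq dest: lin_hom_deg)
qed

lemma lin_tc_homotopy: "tc_homotopy C A t u h \<Longrightarrow> lin h"
  using lin_hom_deg unfolding tc_homotopy_def by blast

lemma tc_homotopy_one: "lin t \<Longrightarrow> tc_homotopy C A t t one"
  by (simp add: tc_homotopy_iff hom_deg0_one D_one fun_eq_iff twist_one conv_one_left
      conv_one_right lin_one one_apply epsA_smul epsA_one epsC_unit)

lemma tc_homotopy_conv:
  assumes t: "lin t" and u: "lin u" and v: "lin v"
    and h: "tc_homotopy C A t u h" and k: "tc_homotopy C A u v k"
  shows "tc_homotopy C A t v (conv h k)"
proof -
  have hd: "hom_deg C A 0 h" and Dh: "D h = (\<lambda>c. conv t h c - conv (twist h) u c)"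
    and eh: "\<And>c. epsA (h c) = epsC c" and uh: "h unitC = 1"
    using h by (simp_all add: tc_homotopy_iff[OF t])
  have kd: "hom_deg C A 0 k" and Dk: "D k = (\<lambda>c. conv u k c - conv (twist k) v c)"
    and uk: "k unitC = 1"
    using k by (simp_all add: tc_homotopy_iff[OF u])
  have lh: "lin h" and hh: "\<And>p x. homog prC p x \<Longrightarrow> homog prA p (h x)" and lk: "lin k"
    using hd kd by (simp_all add: hom_deg0_iff)
  have "D (conv h k) c = conv t (conv h k) c - conv (twist (conv h k)) v c" for c
  proof -
    have "D (conv h k) c = conv (D h) k c + conv (twist h) (D k) c"
      by (rule D_conv[OF lh hh lk])
    also have "\<dots> = (conv (conv t h) k c - conv (conv (twist h) u) k c)
        + (conv (twist h) (conv u k) c - conv (twist h) (conv (twist k) v) c)"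
      by (simp only: Dh Dk conv_diff_left conv_diff_right)
    also have "\<dots> = conv t (conv h k) c - conv (conv (twist h) (twist k)) v c"
      by (simp add: conv_assoc t lh lk lin_twist u v)
    finally show ?thesis by (simp only: twist_conv[OF lh lk])
  qed
  moreover have "epsA (conv h k c) = epsC c" for c
    by (simp add: epsA_conv[OF lh] eh k[unfolded tc_homotopy_iff[OF u]])
  ultimately show ?thesis
    by (simp add: tc_homotopy_iff[OF t] hom_deg0_conv[OF hd kd] conv_unit[OF lh lk] uh uk fun_eq_iff)
qed

text \<open>Differentiating \<open>H \<star> h = 1\<close> gives \<open>D H \<star> h = - \<sigma> H \<star> D h\<close>; multiply by \<open>H\<close> on
  the right.\<close>

lemma D_inverse:
  assumes hH: "hom_deg C A 0 H" and h: "lin h"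
    and hH_one: "conv h H = one" and Hh_one: "conv H h = one"
  shows "D H c = - conv (twist H) (conv (D h) H) c"
proof -
  have lH: "lin H" and hom: "\<And>p x. homog prC p x \<Longrightarrow> homog prA p (H x)"
    using hH by (simp_all add: hom_deg0_iff)
  have DH_h: "conv (D H) h = (\<lambda>c. - conv (twist H) (D h) c)"
  proof
    fix c
    have "conv (D H) h c + conv (twist H) (D h) c = 0"
      using D_conv[OF lH hom h, of c] by (simp add: Hh_one D_one)
    then show "conv (D H) h c = - conv (twist H) (D h) c" by (simp add: eq_neg_iff_add_eq_0)
  qed
  have "D H c = conv (D H) (conv h H) c" by (simp add: hH_one conv_one_right lin_D lH)
  also have "\<dots> = conv (conv (D H) h) H c" by (simp add: conv_assoc lin_D lH h)
  also have "\<dots> = - conv (conv (twist H) (D h)) H c" by (simp only: DH_h conv_minus_left)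
  also have "\<dots> = - conv (twist H) (conv (D h) H) c"
    by (simp add: conv_assoc lin_twist lin_D lH h)
  finally show ?thesis .
qed

lemma tc_homotopy_inverse:
  assumes t: "lin t" and u: "lin u" and h: "tc_homotopy C A t u h"
    and hH: "hom_deg C A 0 H" and hH_one: "conv h H = one" and Hh_one: "conv H h = one"
  shows "tc_homotopy C A u t H"
proof -
  have hd: "hom_deg C A 0 h" and Dh: "D h = (\<lambda>c. conv t h c - conv (twist h) u c)"
    and eh: "\<And>c. epsA (h c) = epsC c" and uh: "h unitC = 1"
    using h by (simp_all add: tc_homotopy_iff[OF t])
  have lh: "lin h" and lH: "lin H" using hd hH by (simp_all add: hom_deg0_iff)
  have twist_inverse: "conv (twist H) (twist h) = one"
    by (simp only: twist_conv[OF lH lh, symmetric] Hh_one twist_one)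
  have "conv (D h) H = (\<lambda>c. t c - conv (twist h) (conv u H) c)"
    by (simp add: fun_eq_iff Dh conv_diff_left conv_assoc t lh lH lin_twist u hH_one conv_one_right)
  moreover have "conv (twist H) (conv (twist h) (conv u H)) c = conv u H c" for c
    by (simp add: conv_assoc[symmetric] lin_twist lH lh lin_conv u twist_inverse conv_one_left)
  ultimately have "D H c = conv u H c - conv (twist H) t c" for c
    by (simp add: D_inverse[OF hH lh hH_one Hh_one] conv_diff_right)
  moreover have "epsA (H c) = epsC c" for c
    using epsA_conv[OF lH eh, of c] by (simp add: Hh_one one_apply epsA_smul epsA_one)
  moreover have "H unitC = 1"
    using conv_unit[OF lH lh] by (simp add: Hh_one uh one_apply epsC_unit)
  ultimately show ?thesis by (simp add: tc_homotopy_iff[OF u] hH fun_eq_iff)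
qed

lemma dg_idealD:
  assumes "dg_ideal A I"
  shows dg_ideal_0: "0 \<in> I" and dg_ideal_add: "x \<in> I \<Longrightarrow> y \<in> I \<Longrightarrow> x + y \<in> I"
    and dg_ideal_minus: "x \<in> I \<Longrightarrow> - x \<in> I" and dg_ideal_smul: "x \<in> I \<Longrightarrow> smA r x \<in> I"
    and dg_ideal_mult_right: "x \<in> I \<Longrightarrow> x * a \<in> I"
  using assms unfolding dg_ideal_def by blast+

lemma dg_ideal_sum: "dg_ideal A I \<Longrightarrow> (\<And>i. i \<in> S \<Longrightarrow> f i \<in> I) \<Longrightarrow> sum f S \<in> I"
  by (induction S rule: infinite_finite_induct) (simp_all add: dg_ideal_0 dg_ideal_add)

lemma conv_in_dg_ideal: "dg_ideal A I \<Longrightarrow> (\<And>x. f x \<in> I) \<Longrightarrow> conv f g c \<in> I"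
  unfolding conv_def
  by (rule mA.fs_ext_closed) (auto simp: tensor2_def dg_idealD)

lemma trivial_mod_one: "dg_ideal A I \<Longrightarrow> trivial_mod C A I one"
  by (simp add: trivial_mod_def dg_ideal_0)

lemma trivial_mod_conv:
  assumes I: "dg_ideal A I" and k: "lin k" and "trivial_mod C A I h" "trivial_mod C A I k"
  shows "trivial_mod C A I (conv h k)"
  unfolding trivial_mod_def
proof
  fix c
  have "conv h k c - one c = conv (\<lambda>x. h x - one x) k c + (k c - one c)"
    by (simp add: conv_diff_left conv_one_left[OF k])
  also have "\<dots> \<in> I"
    using assms by (auto intro!: dg_ideal_add conv_in_dg_ideal simp: trivial_mod_def)
  finally show "conv h k c - one c \<in> I" .
qed

section \<open>Inverting homotopies\<close>

primrec conv_pow :: "('c \<Rightarrow> 'a) \<Rightarrow> nat \<Rightarrow> 'c \<Rightarrow> 'a" where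
  "conv_pow g 0 = one"
| "conv_pow g (Suc n) = conv g (conv_pow g n)"

lemma lin_conv_pow: "lin g \<Longrightarrow> lin (conv_pow g n)"
  by (induction n) (simp_all add: lin_one lin_conv)

lemma hom_deg0_conv_pow: "hom_deg C A 0 g \<Longrightarrow> hom_deg C A 0 (conv_pow g n)"
  by (induction n) (simp_all add: hom_deg0_one hom_deg0_conv)

lemma cup_pow_eq: assumes "lin g" shows "cup_pow C A g = conv_pow g"
proof
  fix n show "cup_pow C A g n = conv_pow g n" by (induction n) (simp_all add: cup0_eq assms)
qed

lemma conv_pow_add:
  assumes g: "lin g" shows "conv_pow g (m + n) = conv (conv_pow g m) (conv_pow g n)"
proof (induction m)
  case 0 then show ?case by (simp add: fun_eq_iff conv_one_left lin_conv_pow[OF g])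
next
  case (Suc m)
  have "conv g (conv (conv_pow g m) (conv_pow g n)) = conv (conv g (conv_pow g m)) (conv_pow g n)"
    by (simp add: fun_eq_iff conv_assoc g lin_conv_pow[OF g])
  with Suc.IH show ?case by simp
qed

lemma conv_pow_Suc':
  assumes g: "lin g" shows "conv_pow g (Suc n) = conv (conv_pow g n) g"
proof -
  have "conv g one = g" by (rule ext) (rule conv_one_right[OF g])
  then show ?thesis using conv_pow_add[OF g, of n 1] by simp
qed

definition tensor_pow :: "('c \<Rightarrow> 'a) \<Rightarrow> ('c \<Rightarrow> 'a) \<Rightarrow> 'c list \<Rightarrow> 'a" where
  "tensor_pow f g l = f (hd l) * prod_list (map g (tl l))"

lemma tensor_pow_multilinear:
  assumes f: "lin f" and g: "lin g"
  shows "tensor_pow f g (xs @ (x + y) # ys) = tensor_pow f g (xs @ x # ys) + tensor_pow f g (xs @ y # ys)"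
    and "tensor_pow f g (xs @ smC r x # ys) = smA r (tensor_pow f g (xs @ x # ys))"
proof -
  show "tensor_pow f g (xs @ (x + y) # ys) = tensor_pow f g (xs @ x # ys) + tensor_pow f g (xs @ y # ys)"
    by (cases xs) (simp_all add: tensor_pow_def lin_add[OF f] lin_add[OF g] distrib_left distrib_right)
  show "tensor_pow f g (xs @ smC r x # ys) = smA r (tensor_pow f g (xs @ x # ys))"
    by (cases xs) (simp_all add: tensor_pow_def lin_smul[OF f] lin_smul[OF g]
        smA_mult_left[symmetric] smA_mult_right[symmetric])
qed

lemma tensor_pow_Delta_iter:
  assumes f: "lin f" and g: "lin g"
  shows "fs_ext smA (tensor_pow f g) (Delta_iter C n c) = conv f (conv_pow g n) c"
  using f
proof (induction n arbitrary: f)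
  case 0 then show ?case by (simp add: tensor_pow_def conv_one_right)
next
  case (Suc n)
  have "fs_ext smA (tensor_pow f g) (Delta_left C l) = tensor_pow (conv f g) g l" for l
  proof -
    have "fs_ext smA (tensor_pow f g) (Delta_left C l)
        = fs_ext smA (\<lambda>m. tensor2 f g m * prod_list (map g (tl l))) (Delta (hd l))"
      unfolding Delta_left_def mA.fs_ext_fs_ext
      by (rule fs_ext_cong) (auto dest!: length_Delta elim!: length2E simp: tensor_pow_def mult.assoc)
    also have "\<dots> = tensor_pow (conv f g) g l"
      unfolding conv_def tensor_pow_def
      by (rule fs_ext_linear[symmetric]) (simp_all add: distrib_right smA_mult_left)
    finally show ?thesis .
  qed
  then have "fs_ext smA (tensor_pow f g) (Delta_iter C (Suc n) c)
      = fs_ext smA (tensor_pow (conv f g) g) (Delta_iter C n c)"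
    by (simp add: mA.fs_ext_fs_ext)
  also have "\<dots> = conv (conv f g) (conv_pow g n) c"
    by (rule Suc.IH) (rule lin_conv[OF Suc.prems g])
  finally show ?case by (simp add: conv_assoc Suc.prems g lin_conv_pow)
qed

definition reduce :: "'c \<Rightarrow> 'c" where
  "reduce x = x - smC (epsC x) unitC"

lemma tensor_pow_reduce:
  assumes f: "lin f" and g: "lin g" and fu: "f unitC = 0" and gu: "g unitC = 0"
  shows "tensor_pow f g (map reduce l) = tensor_pow f g l"
proof -
  have "prod_list (map g (map reduce xs)) = prod_list (map g xs)" for xs
    by (induction xs) (simp_all add: reduce_def lin_diff[OF g] lin_smul[OF g] gu)
  then show ?thesis
    by (cases l) (simp_all add: tensor_pow_def reduce_def lin_diff[OF f] lin_smul[OF f] fu)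
qed

lemma conv_conv_pow_eq_0:
  assumes f: "lin f" and g: "lin g" and fu: "f unitC = 0" and gu: "g unitC = 0"
    and reduced: "fs_ext fs_smul (\<lambda>l. gen (map reduce l)) (Delta_iter C n c) \<in> tnull smC"
  shows "conv f (conv_pow g n) c = 0"
proof -
  have "conv f (conv_pow g n) c = fs_ext smA (\<lambda>l. tensor_pow f g (map reduce l)) (Delta_iter C n c)"
    by (simp add: tensor_pow_Delta_iter[OF f g] tensor_pow_reduce[OF f g fu gu])
  also have "\<dots> = fs_ext smA (tensor_pow f g) (fs_ext fs_smul (\<lambda>l. gen (map reduce l)) (Delta_iter C n c))"
    by (simp add: mA.fs_ext_fs_ext)
  also have "\<dots> = 0"
    by (rule mA.fs_ext_tnull[OF _ _ reduced]) (simp_all add: tensor_pow_multilinear[OF f g])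
  finally show ?thesis .
qed

lemma conv_pow_eventually_0:
  assumes g: "lin g" and gu: "g unitC = 0" and "cocomplete C"
  shows "\<exists>N. \<forall>m\<ge>N. conv_pow g m c = 0"
proof -
  obtain n where reduced: "fs_ext fs_smul (\<lambda>l. gen (map reduce l)) (Delta_iter C n c) \<in> tnull smC"
    using assms(3) unfolding cocomplete_def reduce_def by blast
  have vanish: "conv_pow g (Suc k + n) c = 0" for k
  proof -
    have "conv_pow g (Suc k + n) c = conv (conv_pow g (Suc k)) (conv_pow g n) c"
      by (simp only: conv_pow_add[OF g])
    also have "\<dots> = 0"
      by (rule conv_conv_pow_eq_0[OF lin_conv_pow[OF g] g _ gu reduced])
        (simp add: conv_unit[OF g lin_conv_pow[OF g]] gu)
    finally show ?thesis .
  qed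
  then have "conv_pow g m c = 0" if "m \<ge> Suc n" for m
  proof -
    from that have m: "m = Suc (m - Suc n) + n" by simp
    show ?thesis by (subst m) (rule vanish)
  qed
  then show ?thesis by blast
qed

lemma lin_series:
  assumes lin: "\<And>n. lin (F n)" and nil: "\<And>c. \<exists>N. \<forall>m\<ge>N. F m c = 0"
  shows "lin (series F)"
proof -
  have ev: "\<forall>\<^sub>F M in sequentially. series F z = (\<Sum>n<M. F n z)" for z
    by (rule eventually_series_eq) (rule nil)
  have "series F (x + y) = series F x + series F y" for x y
  proof -
    obtain M where "series F (x + y) = (\<Sum>n<M. F n (x + y))"
      "series F x = (\<Sum>n<M. F n x)" "series F y = (\<Sum>n<M. F n y)"
      using eventually_conj[OF ev eventually_conj[OF ev ev]]
      unfolding eventually_sequentially by blast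
    then show ?thesis by (simp add: lin_add[OF lin] sum.distrib)
  qed
  moreover have "series F (smC r x) = smA r (series F x)" for r x
  proof -
    obtain M where "series F (smC r x) = (\<Sum>n<M. F n (smC r x))" "series F x = (\<Sum>n<M. F n x)"
      using eventually_conj[OF ev ev] unfolding eventually_sequentially by blast
    then show ?thesis by (simp add: lin_smul[OF lin] mA.scale_sum_right)
  qed
  ultimately show ?thesis by (simp add: lin_def)
qed

lemma hom_deg0_series:
  assumes hd: "\<And>n. hom_deg C A 0 (F n)" and nil: "\<And>c. \<exists>N. \<forall>m\<ge>N. F m c = 0"
  shows "hom_deg C A 0 (series F)"
proof -
  have "homog prA p (series F x)" if "homog prC p x" for p x
  proof -
    have "\<forall>\<^sub>F M in sequentially. series F x = (\<Sum>n<M. F n x)"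
      by (rule eventually_series_eq) (rule nil)
    then obtain M where "series F x = (\<Sum>n<M. F n x)"
      unfolding eventually_sequentially by blast
    then show ?thesis using hd that by (simp add: hom_deg0_iff homogA_sum)
  qed
  moreover have "lin (series F)"
    using hd nil by (intro lin_series) (simp_all add: hom_deg0_iff)
  ultimately show ?thesis by (simp add: hom_deg0_iff)
qed

lemma eventually_conv_series_right:
  assumes nil: "\<And>x. \<exists>N. \<forall>m\<ge>N. F m x = 0"
  shows "\<forall>\<^sub>F M in sequentially. conv f (series F) c = (\<Sum>n<M. conv f (F n) c)"
proof -
  have "\<forall>\<^sub>F M in sequentially. \<forall>l\<in>Poly_Mapping.keys (Delta c). series F (l ! 1) = (\<Sum>n<M. F n (l ! 1))"
    by (rule eventually_ball_finite) (simp_all add: eventually_series_eq nil)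
  then show ?thesis
    by (rule eventually_mono) (simp add: conv_cong[where g' = "\<lambda>x. \<Sum>n<_. F n x"] conv_sum_right)
qed

lemma eventually_conv_series_left:
  assumes nil: "\<And>x. \<exists>N. \<forall>m\<ge>N. F m x = 0"
  shows "\<forall>\<^sub>F M in sequentially. conv (series F) g c = (\<Sum>n<M. conv (F n) g c)"
proof -
  have "\<forall>\<^sub>F M in sequentially. \<forall>l\<in>Poly_Mapping.keys (Delta c). series F (l ! 0) = (\<Sum>n<M. F n (l ! 0))"
    by (rule eventually_ball_finite) (simp_all add: eventually_series_eq nil)
  then show ?thesis
    by (rule eventually_mono) (simp add: conv_cong[where f' = "\<lambda>x. \<Sum>n<_. F n x"] conv_sum_left)
qed

lemma conv_geometric_series:
  assumes g: "lin g" and nil: "\<And>c. \<exists>N. \<forall>m\<ge>N. conv_pow g m c = 0"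
    and h: "h = (\<lambda>c. one c - g c)"
  shows "conv h (series (conv_pow g)) = one" and "conv (series (conv_pow g)) h = one"
proof -
  have vanish: "\<forall>\<^sub>F M in sequentially. conv_pow g M c = 0" for c
    using nil[of c] unfolding eventually_sequentially .
  have telescope: "(\<Sum>n<M. conv_pow g n c - conv_pow g (Suc n) c) = one c"
    if "conv_pow g M c = 0" for M c
    using that sum_lessThan_telescope'[of "\<lambda>n. conv_pow g n c" M] by simp
  have right: "conv h (conv_pow g n) c = conv_pow g n c - conv_pow g (Suc n) c" for n c
    by (simp add: h conv_diff_left conv_one_left lin_conv_pow g)
  have left: "conv (conv_pow g n) h c = conv_pow g n c - conv_pow g (Suc n) c" for n c
    by (simp add: h conv_diff_right conv_one_right lin_conv_pow g conv_pow_Suc'[OF g]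
        del: conv_pow.simps(2))
  have "conv h (series (conv_pow g)) c = one c \<and> conv (series (conv_pow g)) h c = one c" for c
  proof -
    obtain M where "conv h (series (conv_pow g)) c = (\<Sum>n<M. conv h (conv_pow g n) c)"
      and "conv (series (conv_pow g)) h c = (\<Sum>n<M. conv (conv_pow g n) h c)"
      and "conv_pow g M c = 0"
      using eventually_conj[OF eventually_conv_series_right[of "conv_pow g", OF nil]
          eventually_conj[OF eventually_conv_series_left[of "conv_pow g", OF nil] vanish]]
      unfolding eventually_sequentially by blast
    then show ?thesis by (simp only: right left telescope)
  qed
  then show "conv h (series (conv_pow g)) = one" and "conv (series (conv_pow g)) h = one"
    by (simp_all add: fun_eq_iff)
qed

lemma trivial_mod_series:
  assumes I: "dg_ideal A I" and gI: "\<And>x. g x \<in> I" and nil: "\<And>c. \<exists>N. \<forall>m\<ge>N. conv_pow g m c = 0"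
  shows "trivial_mod C A I (series (conv_pow g))"
  unfolding trivial_mod_def
proof
  fix c
  have "\<forall>\<^sub>F M in sequentially. series (conv_pow g) c = (\<Sum>n<M. conv_pow g n c)"
    by (rule eventually_series_eq) (rule nil)
  then obtain M where "\<forall>M'\<ge>M. series (conv_pow g) c = (\<Sum>n<M'. conv_pow g n c)"
    unfolding eventually_sequentially by blast
  then have "series (conv_pow g) c = (\<Sum>n<Suc M. conv_pow g n c)" by (meson le_SucI order.refl)
  then have "series (conv_pow g) c - one c = (\<Sum>n<M. conv g (conv_pow g n) c)"
    by (simp add: sum.lessThan_Suc_shift del: sum.lessThan_Suc)
  also have "\<dots> \<in> I" by (rule dg_ideal_sum[OF I]) (rule conv_in_dg_ideal[OF I gI])
  finally show "series (conv_pow g) c - one c \<in> I" .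
qed

lemma series_inverse_homotopy:
  assumes I: "dg_ideal A I" and "cocomplete C" and t: "lin t" and u: "lin u"
    and h: "tc_homotopy C A t u h" and ht: "trivial_mod C A I h"
  defines "g \<equiv> \<lambda>c. one c - h c"
  shows "(\<forall>c. \<exists>N. \<forall>m\<ge>N. cup_pow C A g m c = 0) \<and> hom_deg C A 0 (series (cup_pow C A g))
    \<and> cup C A 0 h (series (cup_pow C A g)) = one \<and> cup C A 0 (series (cup_pow C A g)) h = one
    \<and> tc_homotopy C A u t (series (cup_pow C A g)) \<and> trivial_mod C A I (series (cup_pow C A g))"
proof -
  have hd: "hom_deg C A 0 h" and uh: "h unitC = 1"
    using h by (simp_all add: tc_homotopy_iff[OF t])
  have gd: "hom_deg C A 0 g"
    using hd hom_deg0_one by (simp add: g_def hom_deg0_iff lin_fdiff homogA_diff)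
  then have lg: "lin g" and lh: "lin h" using hd by (simp_all add: hom_deg0_iff)
  have nil: "\<exists>N. \<forall>m\<ge>N. conv_pow g m c = 0" for c
    by (rule conv_pow_eventually_0[OF lg _ assms(2)]) (simp add: g_def uh one_apply epsC_unit)
  have h_eq: "h = (\<lambda>c. one c - g c)" by (simp add: g_def)
  have Hd: "hom_deg C A 0 (series (conv_pow g))"
    by (rule hom_deg0_series[OF hom_deg0_conv_pow[OF gd] nil])
  have gI: "g x \<in> I" for x
    using ht dg_ideal_minus[OF I, of "h x - one x"] by (simp add: g_def trivial_mod_def)
  show ?thesis
    using nil Hd conv_geometric_series[OF lg nil h_eq] trivial_mod_series[OF I gI nil]
      tc_homotopy_inverse[OF t u h Hd conv_geometric_series[OF lg nil h_eq]]
    by (simp add: cup_pow_eq[OF lg] cup0_eq lh hom_deg0_iff[of "series _"])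
qed

lemma equiv_triv_homotopic:
  assumes I: "dg_ideal A I" and "cocomplete C" and lin: "\<And>t. t \<in> T \<Longrightarrow> lin t"
  shows "equiv T {(t, u). t \<in> T \<and> u \<in> T \<and> triv_homotopic C A I t u}"
proof (rule equivI)
  show "refl_on T {(t, u). t \<in> T \<and> u \<in> T \<and> triv_homotopic C A I t u}"
    using tc_homotopy_one trivial_mod_one[OF I] lin by (auto intro: refl_onI simp: triv_homotopic_def)
  show "sym {(t, u). t \<in> T \<and> u \<in> T \<and> triv_homotopic C A I t u}"
  proof (rule symI)
    fix t u assume "(t, u) \<in> {(t, u). t \<in> T \<and> u \<in> T \<and> triv_homotopic C A I t u}"
    then obtain h where "t \<in> T" "u \<in> T" "tc_homotopy C A t u h" "trivial_mod C A I h"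
      by (auto simp: triv_homotopic_def)
    with series_inverse_homotopy[OF assms(1,2) lin lin]
    show "(u, t) \<in> {(t, u). t \<in> T \<and> u \<in> T \<and> triv_homotopic C A I t u}"
      unfolding triv_homotopic_def by blast
  qed
  show "trans {(t, u). t \<in> T \<and> u \<in> T \<and> triv_homotopic C A I t u}"
  proof (rule transI)
    fix t u v
    assume "(t, u) \<in> {(t, u). t \<in> T \<and> u \<in> T \<and> triv_homotopic C A I t u}"
      and "(u, v) \<in> {(t, u). t \<in> T \<and> u \<in> T \<and> triv_homotopic C A I t u}"
    then obtain h k where T: "t \<in> T" "u \<in> T" "v \<in> T"
      and h: "tc_homotopy C A t u h" "trivial_mod C A I h"
      and k: "tc_homotopy C A u v k" "trivial_mod C A I k"
      by (auto simp: triv_homotopic_def)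
    have "tc_homotopy C A t v (conv h k) \<and> trivial_mod C A I (conv h k)"
      using tc_homotopy_conv[OF lin lin lin h(1) k(1)] trivial_mod_conv[OF I lin_tc_homotopy h(2) k(2)]
        k(1) T by blast
    then show "(t, v) \<in> {(t, u). t \<in> T \<and> u \<in> T \<and> triv_homotopic C A I t u}"
      using T unfolding triv_homotopic_def by blast
  qed
qed auto

end

theorem lemma2p2:
  fixes A :: "('k::comm_ring_1, 'a::ring_1) dga"
    and C :: "('k, 'c::ab_group_add) dgc"
    and I :: "'a set"
  assumes "aug_dga A" and "dg_ideal A I" and "coaug_dgc C" and "cocomplete C"
  shows "equiv {t. twisting C A t} {(t, u). twisting C A t \<and> twisting C A u \<and> triv_homotopic C A I t u}
    \<and> (\<forall>t u v h k. twisting C A t \<and> twisting C A u \<and> twisting C A v \<and>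
          tc_homotopy C A t u h \<and> trivial_mod C A I h \<and>
          tc_homotopy C A u v k \<and> trivial_mod C A I k \<longrightarrow>
          tc_homotopy C A t v (cup C A 0 h k) \<and> trivial_mod C A I (cup C A 0 h k))
    \<and> (\<forall>t u h. twisting C A t \<and> twisting C A u \<and>
          tc_homotopy C A t u h \<and> trivial_mod C A I h \<longrightarrow>
          (let g = (\<lambda>c. hom_one C A c - h c);
               hinv = series (cup_pow C A g)
           in (\<forall>c. \<exists>N. \<forall>m\<ge>N. cup_pow C A g m c = 0) \<and>
              hom_deg C A 0 hinv \<and>
              cup C A 0 h hinv = hom_one C A \<and> cup C A 0 hinv h = hom_one C A \<and>
              tc_homotopy C A u t hinv \<and> trivial_mod C A I hinv))"
proof -
  interpret hom_dga A C by (rule hom_dga.intro) fact+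
  have lin: "lin t" if "twisting C A t" for t
    using that lin_hom_deg unfolding twisting_def by blast
  have "equiv {t. twisting C A t} {(t, u). twisting C A t \<and> twisting C A u \<and> triv_homotopic C A I t u}"
    using equiv_triv_homotopic[OF assms(2,4), of "{t. twisting C A t}"] lin by simp
  moreover have "tc_homotopy C A t v (cup C A 0 h k) \<and> trivial_mod C A I (cup C A 0 h k)"
    if "twisting C A t" "twisting C A u" "twisting C A v" "tc_homotopy C A t u h"
      "trivial_mod C A I h" "tc_homotopy C A u v k" "trivial_mod C A I k" for t u v h k
    using that tc_homotopy_conv[OF lin lin lin] trivial_mod_conv[OF assms(2) lin_tc_homotopy]
    by (simp add: cup0_eq[OF lin_tc_homotopy])
  ultimately show ?thesis
    unfolding Let_def using series_inverse_homotopy[OF assms(2,4) lin lin] by blast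
qed

end
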